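(* Let $\beta>0$ and $c>b>0$, and let $(X_t)_{t=0,1,2,\ldots}$ be the discrete-time Markov chain on the nonnegative integers with $X_0=0$ and transition probabilities $$P(k,k+1)=\tfrac12 e^{-\beta c},\qquad P(k,k-1)=\tfrac12 e^{-\beta b},\qquad P(k,k)=1-\tfrac12 e^{-\beta c}-\tfrac12 e^{-\beta b}\quad (k\ge 1),$$ $$P(0,1)=\tfrac12 e^{-\beta c},\qquad P(0,0)=1-\tfrac12 e^{-\beta c},$$ and $P(k,l)=0$ for all other pairs $(k,l)$. For $k\ge1$ define the hitting time $\tau^0_k=\inf\{t\ge 1:\ X_t=k\}$. Then for every $k\ge 1$ and every $\varepsilon>0$, $$\lim_{\beta\to\infty} P\left(e^{\beta c k-\beta b(k-1)-\beta\varepsilon}<\tau^0_k<e^{\beta c k-\beta b(k-1)+\beta\varepsilon}\right)=1 .$$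
   Context: The constants $c>b>0$ are held fixed while $\beta\to\infty$; the law of the chain (and hence of $\tau^0_k$) depends on $\beta$ through the transition probabilities. *)

theory Defs
  imports "HOL-Probability.Probability"
begin

definition trans_prob :: "real \<Rightarrow> real \<Rightarrow> real \<Rightarrow> nat \<Rightarrow> nat \<Rightarrow> real" where
  "trans_prob \<beta> b c k l =
     (if k = 0 then
        (if l = 1 then exp (-\<beta>*c)/2 else if l = 0 then 1 - exp (-\<beta>*c)/2 else 0)
      else
        (if l = k + 1 then exp (-\<beta>*c)/2
         else if l = k - 1 then exp (-\<beta>*b)/2
         else if l = k then 1 - exp (-\<beta>*c)/2 - exp (-\<beta>*b)/2
         else 0))"

text \<open>Transition kernel as a pmf (well-defined when beta > 0 and c > b > 0).\<close>
definition kernel :: "real \<Rightarrow> real \<Rightarrow> real \<Rightarrow> nat \<Rightarrow> nat pmf" where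
  "kernel \<beta> b c k = embed_pmf (\<lambda>l. trans_prob \<beta> b c k l)"

fun path :: "real \<Rightarrow> real \<Rightarrow> real \<Rightarrow> nat \<Rightarrow> nat list pmf" where
  "path \<beta> b c 0 = return_pmf [0]"
| "path \<beta> b c (Suc n) =
     bind_pmf (path \<beta> b c n) (\<lambda>xs. map_pmf (\<lambda>y. xs @ [y]) (kernel \<beta> b c (last xs)))"

definition hit_prob :: "real \<Rightarrow> real \<Rightarrow> real \<Rightarrow> nat \<Rightarrow> nat \<Rightarrow> real" where
  "hit_prob \<beta> b c k t =
     measure_pmf.prob (path \<beta> b c t)
       {xs. xs ! t = k \<and> (\<forall>s. 1 \<le> s \<and> s < t \<longrightarrow> xs ! s \<noteq> k)}"

text \<open>P(lo < tau^0_k < hi), as a sum over the disjoint events {tau^0_k = t}.\<close>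
definition tau_between_prob :: "real \<Rightarrow> real \<Rightarrow> real \<Rightarrow> nat \<Rightarrow> real \<Rightarrow> real \<Rightarrow> real" where
  "tau_between_prob \<beta> b c k lo hi =
     (\<Sum>t \<in> {t::nat. 1 \<le> t \<and> lo < real t \<and> real t < hi}. hit_prob \<beta> b c k t)"

end

theory Submission
  imports Defs "HOL-Real_Asymp.Real_Asymp"
begin

text \<open>
  Write p = exp(-\<beta>c)/2 and q = exp(-\<beta>b)/2 for the rates of the up and down steps,
  \<rho> = p/q, and \<Gamma> = ck - b(k-1).

  Early hitting is unlikely: the geometric measure \<rho>^j is invariant and dominates the initial
  law, so P(X_n = j) \<le> \<rho>^j for all n. A first visit to k at time t+1 needs X_t = k-1 followed
  by an up-step, hence P(\<tau> = t+1) \<le> p \<rho>^(k-1) = exp(-\<beta>\<Gamma>)/2, and the times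
  t \<le> exp(\<beta>(\<Gamma>-\<epsilon>)) together carry probability at most exp(-\<beta>\<epsilon>)/2.

  Late hitting is unlikely: the Lyapunov function h(j) = \<Sum> j\<le>i<k. (2q/p)^i/p vanishes at k,
  is at least 1 below k, and its expected value drops by at least 1 in every step taken below k.
  So W_n = E[h(X_n); \<tau> > n] loses at least P(\<tau> > n) \<ge> W_n/h(0) per step, which gives
  P(\<tau> > n) \<le> h(0) exp(-n/h(0)) with h(0) \<le> k 2^k exp(\<beta>\<Gamma>); at n = exp(\<beta>(\<Gamma>+\<epsilon>)) this
  is doubly exponentially small in \<beta>.
\<close>

lemma integral_cong_pmf:
  fixes f g :: "'a \<Rightarrow> real"
  assumes "\<And>x. x \<in> set_pmf M \<Longrightarrow> f x = g x"
  shows "(\<integral>x. f x \<partial>M) = (\<integral>x. g x \<partial>M)"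
  by (rule integral_cong_AE) (auto simp: AE_measure_pmf_iff assms)

lemma integral_bind_pmf_finite:
  fixes f :: "'b \<Rightarrow> real"
  assumes M: "finite (set_pmf M)" and N: "\<And>x. x \<in> set_pmf M \<Longrightarrow> finite (set_pmf (N x))"
  shows "(\<integral>y. f y \<partial>bind_pmf M N) = (\<integral>x. (\<integral>y. f y \<partial>N x) \<partial>M)"
proof -
  define A where "A = set_pmf (bind_pmf M N)"
  have A: "finite A" using M N by (auto simp: A_def)
  have "(\<integral>y. f y \<partial>bind_pmf M N) = (\<Sum>a\<in>A. f a * (\<integral>x. pmf (N x) a \<partial>M))"
    by (subst integral_measure_pmf_real[OF A]) (auto simp: A_def pmf_bind)
  also have "\<dots> = (\<integral>x. (\<Sum>a\<in>A. f a * pmf (N x) a) \<partial>M)"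
    using M by (simp add: integrable_measure_pmf_finite)
  also have "\<dots> = (\<integral>x. (\<integral>y. f y \<partial>N x) \<partial>M)"
  proof (rule integral_cong_pmf)
    fix x assume "x \<in> set_pmf M"
    then show "(\<Sum>a\<in>A. f a * pmf (N x) a) = (\<integral>y. f y \<partial>N x)"
      by (intro integral_measure_pmf_real[OF A, symmetric]) (auto simp: A_def)
  qed
  finally show ?thesis .
qed

lemma integral_mono_pmf_finite:
  fixes f g :: "'a \<Rightarrow> real"
  assumes "finite (set_pmf M)" and "\<And>x. x \<in> set_pmf M \<Longrightarrow> f x \<le> g x"
  shows "(\<integral>x. f x \<partial>M) \<le> (\<integral>x. g x \<partial>M)"
  by (rule integral_mono_AE) (auto simp: AE_measure_pmf_iff assms integrable_measure_pmf_finite)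

lemma exp_decay_of_lyapunov_drift:
  fixes U W :: "nat \<Rightarrow> real"
  assumes U_nonneg: "\<And>n. 0 \<le> U n" and U_le_W: "\<And>n. U n \<le> W n"
    and W_le: "\<And>n. W n \<le> H * U n" and drift: "\<And>n. W (Suc n) \<le> W n - U n" and H: "1 \<le> H"
  shows "U n \<le> W 0 * exp (- real n / H)"
proof -
  have W_decay: "W n \<le> W 0 * (1 - 1 / H) ^ n" for n
  proof (induction n)
    case (Suc n)
    have "W n / H \<le> U n"
      using W_le[of n] H by (simp add: divide_le_eq mult.commute)
    then have "W (Suc n) \<le> W n * (1 - 1 / H)"
      using drift[of n] by (simp add: algebra_simps)
    also have "\<dots> \<le> W 0 * (1 - 1 / H) ^ n * (1 - 1 / H)"
      using Suc.IH H by (intro mult_right_mono) auto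
    finally show ?case by (simp add: mult_ac)
  qed simp
  have "(1 - 1 / H) ^ n \<le> exp (- 1 / H) ^ n"
    using H exp_ge_add_one_self[of "- 1 / H"] by (intro power_mono) auto
  also have "\<dots> = exp (- real n / H)"
    by (simp flip: exp_of_nat_mult)
  finally have "W 0 * (1 - 1 / H) ^ n \<le> W 0 * exp (- real n / H)"
    using U_nonneg[of 0] U_le_W[of 0] by (intro mult_left_mono) auto
  then show ?thesis
    using U_le_W[of n] W_decay[of n] by linarith
qed

lemma mult_exp_neg_divide_mono:
  fixes a x y :: real
  assumes "0 \<le> a" and "0 < x" and "x \<le> y"
  shows "x * exp (- a / x) \<le> y * exp (- a / y)"
proof (rule mult_mono)
  have "a / y \<le> a / x"
    using assms by (intro divide_left_mono) auto
  then show "exp (- a / x) \<le> exp (- a / y)"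
    by simp
qed (use assms in auto)

lemma deviation_bound_tendsto_0:
  fixes K \<Gamma> \<epsilon> :: real
  assumes "0 < K" and "0 < \<Gamma>" and "0 < \<epsilon>"
  shows "((\<lambda>\<beta>. K * exp (\<beta> * \<Gamma>) * exp 1 * exp (- exp (\<beta> * \<epsilon>) / K) +
                exp (- (\<beta> * \<epsilon>)) / 2) \<longlongrightarrow> 0) at_top"
  using assms by real_asymp

locale birth_death_chain =
  fixes \<beta> b c :: real
  assumes \<beta>_pos: "0 < \<beta>" and b_pos: "0 < b" and b_less_c: "b < c"
begin

abbreviation "T \<equiv> trans_prob \<beta> b c"
definition p :: real where "p = exp (- \<beta> * c) / 2"
definition q :: real where "q = exp (- \<beta> * b) / 2"
abbreviation "\<rho> \<equiv> p / q"

lemma p_pos: "0 < p" and p_less_q: "p < q" and q_less_half: "q < 1 / 2"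
  using \<beta>_pos b_pos b_less_c by (auto simp: p_def q_def)

lemma trans_prob_nonneg: "0 \<le> T i l"
proof -
  have "exp (- \<beta> * c) < 1" "exp (- \<beta> * b) < 1"
    using \<beta>_pos b_pos b_less_c by auto
  with exp_gt_zero[of "- \<beta> * c"] exp_gt_zero[of "- \<beta> * b"] show ?thesis
    unfolding trans_prob_def by (simp only: split: if_split) linarith
qed

lemma trans_prob_eq_0_right: "l \<notin> {i - 1, i, i + 1} \<Longrightarrow> T i l = 0"
  by (auto simp: trans_prob_def)

lemma trans_prob_eq_0_left: "i \<notin> {l - 1, l, l + 1} \<Longrightarrow> T i l = 0"
  by (auto simp: trans_prob_def)

lemma trans_prob_up: "T i (Suc i) = p"
  by (simp add: trans_prob_def p_def)

lemma trans_prob_down: "T (Suc i) i = q"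
  by (simp add: trans_prob_def q_def)

lemma trans_prob_stay: "0 < i \<Longrightarrow> T i i = 1 - p - q"
  by (cases i) (auto simp: trans_prob_def p_def q_def)

lemma trans_prob_stay_0: "T 0 0 = 1 - p"
  by (simp add: trans_prob_def p_def)

lemma sum_trans_prob: "(\<Sum>l\<in>{i - 1, i, i + 1}. T i l) = 1"
  by (cases i) (auto simp: trans_prob_def)

lemma pmf_kernel: "pmf (kernel \<beta> b c i) l = T i l"
proof -
  have "(\<integral>\<^sup>+l. ennreal (T i l) \<partial>count_space UNIV) =
          (\<Sum>l\<in>{i - 1, i, i + 1}. ennreal (T i l))"
    by (rule nn_integral_count_space') (auto simp: trans_prob_eq_0_right)
  also have "\<dots> = ennreal (\<Sum>l\<in>{i - 1, i, i + 1}. T i l)"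
    by (rule sum_ennreal) (rule trans_prob_nonneg)
  also have "\<dots> = 1"
    by (simp only: sum_trans_prob ennreal_1)
  finally show ?thesis
    unfolding kernel_def by (rule pmf_embed_pmf[OF trans_prob_nonneg])
qed

lemma set_pmf_kernel: "set_pmf (kernel \<beta> b c i) \<subseteq> {i - 1, i, i + 1}"
  using trans_prob_eq_0_right by (auto simp: set_pmf_eq pmf_kernel)

lemma integral_kernel:
  "(\<integral>y. f y \<partial>kernel \<beta> b c i) = (\<Sum>l\<in>{i - 1, i, i + 1}. f l * T i l)"
  using set_pmf_kernel
  by (subst integral_measure_pmf_real[where A = "{i - 1, i, i + 1}"]) (auto simp: pmf_kernel)

lemma path_support:
  assumes "xs \<in> set_pmf (path \<beta> b c n)"
  shows "length xs = Suc n" and "xs ! 0 = 0" and "\<And>s. s < n \<Longrightarrow> xs ! Suc s \<le> xs ! s + 1"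
proof -
  have "length xs = Suc n \<and> xs ! 0 = 0 \<and> (\<forall>s<n. xs ! Suc s \<le> xs ! s + 1)"
    using assms
  proof (induction n arbitrary: xs)
    case (Suc n)
    then obtain ys y where ys: "ys \<in> set_pmf (path \<beta> b c n)"
      and y: "y \<in> set_pmf (kernel \<beta> b c (last ys))" and xs: "xs = ys @ [y]"
      by auto
    have IH: "length ys = Suc n" "ys ! 0 = 0" "\<forall>s<n. ys ! Suc s \<le> ys ! s + 1"
      using Suc.IH[OF ys] by auto
    have "last ys = ys ! n"
      using IH(1) by (cases ys rule: rev_cases) auto
    then have "y \<le> ys ! n + 1"
      using y set_pmf_kernel by fastforce
    then show ?case
      using IH by (auto simp: xs nth_append less_Suc_eq)
  qed simp
  then show "length xs = Suc n" and "xs ! 0 = 0" and "\<And>s. s < n \<Longrightarrow> xs ! Suc s \<le> xs ! s + 1"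
    by auto
qed

lemma last_path: "xs \<in> set_pmf (path \<beta> b c n) \<Longrightarrow> last xs = xs ! n"
  using path_support(1)[of xs n] by (cases xs rule: rev_cases) auto

lemma finite_set_pmf_path: "finite (set_pmf (path \<beta> b c n))"
  by (induction n) (auto intro: finite_subset[OF set_pmf_kernel])

lemma integral_path_Suc:
  fixes F :: "nat list \<Rightarrow> real"
  shows "(\<integral>xs. F xs \<partial>path \<beta> b c (Suc n)) =
           (\<integral>ys. (\<integral>y. F (ys @ [y]) \<partial>kernel \<beta> b c (last ys)) \<partial>path \<beta> b c n)"
  by (simp only: path.simps, subst integral_bind_pmf_finite)
     (auto simp: finite_set_pmf_path intro: finite_subset[OF set_pmf_kernel])

lemma prob_last_Suc:
  "measure (path \<beta> b c (Suc n)) {xs. last xs = j} =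
     (\<Sum>i\<in>{j - 1, j, j + 1}. T i j * measure (path \<beta> b c n) {ys. last ys = i})"
proof -
  have "measure (path \<beta> b c (Suc n)) {xs. last xs = j} = (\<integral>ys. T (last ys) j \<partial>path \<beta> b c n)"
  proof -
    have "(\<lambda>y. indicator {xs. last xs = j} (ys @ [y]) :: real) = indicator {j}" for ys
      by (auto simp: indicator_def)
    then show ?thesis
      using integral_path_Suc[where F = "indicator {xs. last xs = j}"]
      by (simp add: measure_pmf_single pmf_kernel)
  qed
  also have "\<dots> = (\<integral>ys. (\<Sum>i\<in>{j - 1, j, j + 1}. T i j * indicator {ys. last ys = i} ys)
                       \<partial>path \<beta> b c n)"
  proof (rule Bochner_Integration.integral_cong[OF refl])
    fix ys :: "nat list"
    have "(\<Sum>i\<in>{j - 1, j, j + 1}. T i j * indicator {ys. last ys = i} ys) =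
            (\<Sum>i\<in>{j - 1, j, j + 1}. if last ys = i then T i j else 0)"
      by (intro sum.cong) (auto simp: indicator_def)
    then show "T (last ys) j = (\<Sum>i\<in>{j - 1, j, j + 1}. T i j * indicator {ys. last ys = i} ys)"
      using trans_prob_eq_0_left[of "last ys" j] by simp
  qed
  also have "\<dots> = (\<Sum>i\<in>{j - 1, j, j + 1}. T i j * measure (path \<beta> b c n) {ys. last ys = i})"
    by (subst Bochner_Integration.integral_sum) (simp_all add: integrable_measure_pmf_finite finite_set_pmf_path)
  finally show ?thesis .
qed

lemma rho_invariant: "(\<Sum>i\<in>{j - 1, j, j + 1}. T i j * \<rho> ^ i) = \<rho> ^ j"
proof (cases j)
  case 0
  then show ?thesis
    using p_pos p_less_q by (simp add: trans_prob_down trans_prob_stay_0)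
next
  case (Suc m)
  have "(\<Sum>i\<in>{j - 1, j, j + 1}. T i j * \<rho> ^ i) =
          p * \<rho> ^ m + (1 - p - q) * \<rho> ^ Suc m + q * \<rho> ^ Suc (Suc m)"
    by (simp add: Suc trans_prob_up trans_prob_stay trans_prob_down)
  also have "\<dots> = \<rho> ^ j"
    using p_pos p_less_q by (simp add: Suc field_simps)
  finally show ?thesis .
qed

lemma prob_last_le: "measure (path \<beta> b c n) {xs. last xs = j} \<le> \<rho> ^ j"
proof (induction n arbitrary: j)
  case 0
  then show ?case
    using p_pos p_less_q by (simp add: indicator_def)
next
  case (Suc n)
  have "measure (path \<beta> b c (Suc n)) {xs. last xs = j} \<le> (\<Sum>i\<in>{j - 1, j, j + 1}. T i j * \<rho> ^ i)"
    unfolding prob_last_Suc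
    by (intro sum_mono mult_left_mono Suc.IH trans_prob_nonneg)
  then show ?case
    by (simp only: rho_invariant)
qed

lemma rho_eq: "\<rho> = exp (- (\<beta> * (c - b)))"
proof -
  have "\<rho> = exp (- (\<beta> * c)) / exp (- (\<beta> * b))"
    by (simp add: p_def q_def)
  also have "\<dots> = exp (- (\<beta> * c) - - (\<beta> * b))"
    by (rule exp_diff[symmetric])
  finally show ?thesis
    by (simp add: algebra_simps)
qed

lemma two_q_div_p_eq: "2 * q / p = 2 * exp (\<beta> * (c - b))"
proof -
  have "2 * q / p = 2 * (exp (- (\<beta> * b)) / exp (- (\<beta> * c)))"
    by (simp add: p_def q_def)
  also have "exp (- (\<beta> * b)) / exp (- (\<beta> * c)) = exp (- (\<beta> * b) - - (\<beta> * c))"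
    by (rule exp_diff[symmetric])
  finally show ?thesis
    by (simp add: algebra_simps)
qed

end

locale hitting_time = birth_death_chain +
  fixes k :: nat
  assumes k_pos: "1 \<le> k"
begin

definition avoids :: "nat \<Rightarrow> nat list \<Rightarrow> bool" where
  "avoids n xs \<longleftrightarrow> (\<forall>s\<in>{1..n}. xs ! s \<noteq> k)"

definition survival_prob :: "nat \<Rightarrow> real" where
  "survival_prob n = measure (path \<beta> b c n) {xs. avoids n xs}"

definition first_hit_set :: "nat \<Rightarrow> nat list set" where
  "first_hit_set t = {xs. xs ! t = k \<and> (\<forall>s. 1 \<le> s \<and> s < t \<longrightarrow> xs ! s \<noteq> k)}"

abbreviation "hit \<equiv> hit_prob \<beta> b c k"

lemma hit_prob_eq: "hit t = measure (path \<beta> b c t) (first_hit_set t)"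
  by (simp add: hit_prob_def first_hit_set_def)

lemma avoids_imp_below:
  assumes xs: "xs \<in> set_pmf (path \<beta> b c n)" and "avoids n xs" and "s \<le> n"
  shows "xs ! s < k"
  using \<open>s \<le> n\<close>
proof (induction s)
  case 0
  then show ?case
    using path_support(2)[OF xs] k_pos by simp
next
  case (Suc s)
  then have "xs ! Suc s \<le> xs ! s + 1" and "xs ! Suc s \<noteq> k"
    using path_support(3)[OF xs] \<open>avoids n xs\<close> by (auto simp: avoids_def)
  with Suc show ?case
    by simp
qed

lemma avoids_imp_last_below: "xs \<in> set_pmf (path \<beta> b c n) \<Longrightarrow> avoids n xs \<Longrightarrow> last xs < k"
  using avoids_imp_below[of xs n n] last_path by simp

lemma avoids_snoc:
  assumes "ys \<in> set_pmf (path \<beta> b c n)"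
  shows "avoids (Suc n) (ys @ [y]) \<longleftrightarrow> avoids n ys \<and> y \<noteq> k"
proof -
  have "{1..Suc n} = insert (Suc n) {1..n}"
    by auto
  then show ?thesis
    using path_support(1)[OF assms] by (auto simp: avoids_def nth_append)
qed

lemma first_hit_snoc:
  assumes "ys \<in> set_pmf (path \<beta> b c n)"
  shows "ys @ [y] \<in> first_hit_set (Suc n) \<longleftrightarrow> y = k \<and> avoids n ys"
  using path_support(1)[OF assms] by (auto simp: first_hit_set_def avoids_def nth_append less_Suc_eq_le)

lemma survival_prob_Suc: "survival_prob (Suc n) + hit (Suc n) = survival_prob n"
proof -
  let ?A = "\<lambda>n. {xs. avoids n xs}" and ?H = "first_hit_set (Suc n)"
  have snoc:
    "indicator (?A (Suc n)) (ys @ [y]) + indicator ?H (ys @ [y]) = (indicator (?A n) ys :: real)"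
    if "ys \<in> set_pmf (path \<beta> b c n)" for ys y
    using avoids_snoc[OF that] first_hit_snoc[OF that] by (auto simp: indicator_def)
  have "survival_prob (Suc n) + hit (Suc n) =
          (\<integral>xs. indicator (?A (Suc n)) xs + indicator ?H xs \<partial>path \<beta> b c (Suc n))"
    by (subst Bochner_Integration.integral_add)
       (auto simp: survival_prob_def hit_prob_eq integrable_measure_pmf_finite finite_set_pmf_path
             simp del: path.simps)
  also have "\<dots> = (\<integral>ys. (\<integral>y. indicator (?A (Suc n)) (ys @ [y]) + indicator ?H (ys @ [y])
                        \<partial>kernel \<beta> b c (last ys)) \<partial>path \<beta> b c n)"
    by (rule integral_path_Suc)
  also have "\<dots> = (\<integral>ys. indicator (?A n) ys \<partial>path \<beta> b c n)"
    by (rule integral_cong_pmf) (simp add: snoc)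
  also have "\<dots> = survival_prob n"
    by (simp add: survival_prob_def)
  finally show ?thesis .
qed

lemma hit_prob_sum: "(\<Sum>t\<in>{1..N}. hit t) + survival_prob N = 1"
proof (induction N)
  case 0
  then show ?case
    by (simp add: survival_prob_def avoids_def)
next
  case (Suc N)
  then show ?case
    using survival_prob_Suc[of N] by (simp add: sum.cl_ivl_Suc)
qed

lemma hit_prob_Suc_le: "hit (Suc n) \<le> p * \<rho> ^ (k - 1)"
proof -
  let ?A = "{xs. avoids n xs}" and ?H = "first_hit_set (Suc n)"
  have snoc: "indicator ?H (ys @ [y]) = (indicator ?A ys * indicator {k} y :: real)"
    if "ys \<in> set_pmf (path \<beta> b c n)" for ys y
    using first_hit_snoc[OF that] by (auto simp: indicator_def)
  have below: "indicator ?A ys * T (last ys) k \<le> p * indicator {xs. last xs = k - 1} ys"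
    if ys: "ys \<in> set_pmf (path \<beta> b c n)" for ys
  proof (cases "avoids n ys")
    case True
    then have "last ys < k"
      using avoids_imp_last_below[OF ys] by simp
    then have "T (last ys) k = (if last ys = k - 1 then p else 0)"
      using trans_prob_up[of "k - 1"] trans_prob_eq_0_left[of "last ys" k] by auto
    with True show ?thesis
      by (simp add: indicator_def)
  qed (use p_pos in simp)
  have "hit (Suc n) = (\<integral>xs. indicator ?H xs \<partial>path \<beta> b c (Suc n))"
    by (simp add: hit_prob_eq)
  also have "\<dots> = (\<integral>ys. (\<integral>y. indicator ?H (ys @ [y]) \<partial>kernel \<beta> b c (last ys)) \<partial>path \<beta> b c n)"
    by (rule integral_path_Suc)
  also have "\<dots> = (\<integral>ys. indicator ?A ys * T (last ys) k \<partial>path \<beta> b c n)"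
    by (rule integral_cong_pmf) (simp add: snoc measure_pmf_single pmf_kernel)
  also have "\<dots> \<le> (\<integral>ys. p * indicator {xs. last xs = k - 1} ys \<partial>path \<beta> b c n)"
    by (rule integral_mono_pmf_finite[OF finite_set_pmf_path below])
  also have "\<dots> \<le> p * \<rho> ^ (k - 1)"
    using prob_last_le[of n "k - 1"] p_pos by simp
  finally show ?thesis .
qed

text \<open>The increments d_i = (2q/p)^i/p satisfy q d_(i-1) - p d_i \<le> -1, which is the drift
  condition of \<open>lyap_drift\<close>; d_0 = 1/p handles the reflection at 0.\<close>

definition lyap :: "nat \<Rightarrow> real" where
  "lyap j = (\<Sum>i\<in>{j..<k}. (2 * q / p) ^ i / p)"

lemma lyap_Suc: "j < k \<Longrightarrow> lyap j = (2 * q / p) ^ j / p + lyap (Suc j)"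
  unfolding lyap_def by (simp add: sum.atLeast_Suc_lessThan)

lemma one_le_two_q_div_p: "1 \<le> 2 * q / p"
  using p_pos p_less_q by (simp add: le_divide_eq)

lemma one_le_lyap_increment: "1 \<le> (2 * q / p) ^ i / p"
proof -
  have "1 \<le> (2 * q / p) ^ i"
    using one_le_two_q_div_p by simp
  moreover have "1 \<le> 1 / p"
    using p_pos p_less_q q_less_half by (simp add: le_divide_eq)
  ultimately show ?thesis
    using mult_mono[of 1 "(2 * q / p) ^ i" 1 "1 / p"] by simp
qed

lemma lyap_nonneg: "0 \<le> lyap j"
  unfolding lyap_def using one_le_lyap_increment by (intro sum_nonneg) (meson order_trans zero_le_one)

lemma one_le_lyap: "j < k \<Longrightarrow> 1 \<le> lyap j"
  using lyap_Suc[of j] one_le_lyap_increment[of j] lyap_nonneg[of "Suc j"] by simp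

lemma lyap_le_lyap_0: "lyap j \<le> lyap 0"
  unfolding lyap_def using lyap_nonneg one_le_lyap_increment
  by (intro sum_mono2) (auto intro: order_trans[OF zero_le_one])

lemma lyap_0_le: "lyap 0 \<le> real k * ((2 * q / p) ^ (k - 1) / p)"
proof -
  have "lyap 0 \<le> (\<Sum>i\<in>{0..<k}. (2 * q / p) ^ (k - 1) / p)"
    unfolding lyap_def using p_pos one_le_two_q_div_p
    by (intro sum_mono divide_right_mono power_increasing) auto
  then show ?thesis
    by simp
qed

lemma lyap_drift:
  assumes "i < k"
  shows "(\<Sum>l\<in>{i - 1, i, i + 1}. lyap l * T i l) \<le> lyap i - 1"
proof (cases i)
  case 0
  have "(\<Sum>l\<in>{i - 1, i, i + 1}. lyap l * T i l) = lyap 0 - p * (lyap 0 - lyap 1)"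
    by (simp add: 0 trans_prob_stay_0 trans_prob_up[of 0, simplified] algebra_simps)
  also have "p * (lyap 0 - lyap 1) = 1"
    using lyap_Suc[of 0] k_pos p_pos by simp
  finally show ?thesis
    by (simp add: 0)
next
  case (Suc m)
  define r where "r = 2 * q / p"
  have "(\<Sum>l\<in>{i - 1, i, i + 1}. lyap l * T i l) = q * lyap m + (1 - p - q) * lyap i + p * lyap (Suc i)"
    by (simp add: Suc trans_prob_up trans_prob_down trans_prob_stay)
  also have "\<dots> = lyap i - q / p * r ^ m"
  proof -
    have lyap_m: "lyap m = r ^ m / p + lyap i" and lyap_Suc_i: "lyap (Suc i) = lyap i - r ^ i / p"
      using lyap_Suc[of m] lyap_Suc[of i] assms by (simp_all add: Suc r_def)
    have r_i: "r ^ i = 2 * q / p * r ^ m"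
      by (simp add: Suc r_def)
    show ?thesis
      using p_pos by (simp add: lyap_m lyap_Suc_i r_i field_simps)
  qed
  also have "\<dots> \<le> lyap i - 1"
  proof -
    have "1 \<le> q / p" and "1 \<le> r ^ m"
      using p_pos p_less_q one_le_two_q_div_p by (auto simp: r_def)
    then show ?thesis
      using mult_mono[of 1 "q / p" 1 "r ^ m"] by simp
  qed
  finally show ?thesis .
qed

definition lyap_mass :: "nat \<Rightarrow> real" where
  "lyap_mass n = (\<integral>xs. indicator {xs. avoids n xs} xs * lyap (last xs) \<partial>path \<beta> b c n)"

lemma lyap_mass_0: "lyap_mass 0 = lyap 0"
  by (simp add: lyap_mass_def avoids_def)

lemma survival_prob_eq_integral:
  "survival_prob n = (\<integral>xs. indicator {xs. avoids n xs} xs \<partial>path \<beta> b c n)"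
  by (simp add: survival_prob_def)

lemma survival_prob_le_lyap_mass: "survival_prob n \<le> lyap_mass n"
  unfolding survival_prob_eq_integral lyap_mass_def
  by (rule integral_mono_pmf_finite[OF finite_set_pmf_path])
     (auto simp: indicator_def intro: one_le_lyap avoids_imp_last_below)

lemma lyap_mass_le: "lyap_mass n \<le> lyap 0 * survival_prob n"
proof -
  have "lyap_mass n \<le> (\<integral>xs. lyap 0 * indicator {xs. avoids n xs} xs \<partial>path \<beta> b c n)"
    unfolding lyap_mass_def
    by (rule integral_mono_pmf_finite[OF finite_set_pmf_path]) (auto simp: indicator_def lyap_le_lyap_0)
  then show ?thesis
    by (simp add: survival_prob_def)
qed

lemma lyap_mass_Suc: "lyap_mass (Suc n) \<le> lyap_mass n - survival_prob n"
proof -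
  let ?A = "\<lambda>n. {xs. avoids n xs}"
  have snoc:
    "indicator (?A (Suc n)) (ys @ [y]) * lyap y = (indicator (?A n) ys * lyap y :: real)"
    if "ys \<in> set_pmf (path \<beta> b c n)" for ys y
    using avoids_snoc[OF that, of y] by (cases "y = k") (simp_all add: indicator_def lyap_def)
  have drift: "indicator (?A n) ys * (\<integral>y. lyap y \<partial>kernel \<beta> b c (last ys)) \<le>
                 indicator (?A n) ys * (lyap (last ys) - 1)"
    if "ys \<in> set_pmf (path \<beta> b c n)" for ys
    using lyap_drift[OF avoids_imp_last_below[OF that]] by (simp add: indicator_def integral_kernel)
  have "lyap_mass (Suc n) =
          (\<integral>ys. (\<integral>y. indicator (?A (Suc n)) (ys @ [y]) * lyap (last (ys @ [y]))
                  \<partial>kernel \<beta> b c (last ys)) \<partial>path \<beta> b c n)"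
    unfolding lyap_mass_def by (rule integral_path_Suc)
  also have "\<dots> = (\<integral>ys. indicator (?A n) ys * (\<integral>y. lyap y \<partial>kernel \<beta> b c (last ys))
                       \<partial>path \<beta> b c n)"
    by (rule integral_cong_pmf) (simp add: snoc)
  also have "\<dots> \<le> (\<integral>ys. indicator (?A n) ys * (lyap (last ys) - 1) \<partial>path \<beta> b c n)"
    by (rule integral_mono_pmf_finite[OF finite_set_pmf_path drift])
  also have "\<dots> = lyap_mass n - survival_prob n"
    unfolding lyap_mass_def survival_prob_eq_integral right_diff_distrib mult_1_right
    by (rule Bochner_Integration.integral_diff) (auto intro: integrable_measure_pmf_finite finite_set_pmf_path)
  finally show ?thesis .
qed

lemma survival_prob_le: "survival_prob n \<le> lyap 0 * exp (- real n / lyap 0)"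
  using exp_decay_of_lyapunov_drift[of survival_prob lyap_mass "lyap 0", OF _ survival_prob_le_lyap_mass
      lyap_mass_le lyap_mass_Suc] one_le_lyap[of 0] k_pos
  by (simp add: survival_prob_def lyap_mass_0)

abbreviation "\<Gamma> \<equiv> c * real k - b * (real k - 1)"

lemma \<Gamma>_pos: "0 < \<Gamma>"
proof -
  have "\<Gamma> = (c - b) * real k + b"
    by (simp add: algebra_simps)
  moreover have "0 \<le> (c - b) * real k"
    using b_less_c by simp
  ultimately show ?thesis
    using b_pos by linarith
qed

lemma p_rho_power_eq: "p * \<rho> ^ (k - 1) = exp (- (\<beta> * \<Gamma>)) / 2"
proof -
  have "p * \<rho> ^ (k - 1) = exp (- (\<beta> * c)) * exp (real (k - 1) * (- (\<beta> * (c - b)))) / 2"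
    unfolding rho_eq exp_of_nat_mult by (simp add: p_def)
  also have "\<dots> = exp (- (\<beta> * c) + real (k - 1) * (- (\<beta> * (c - b)))) / 2"
    by (simp only: exp_add)
  also have "- (\<beta> * c) + real (k - 1) * (- (\<beta> * (c - b))) = - (\<beta> * \<Gamma>)"
    using k_pos by (simp add: of_nat_diff algebra_simps)
  finally show ?thesis .
qed

lemma lyap_top_increment_eq: "(2 * q / p) ^ (k - 1) / p = 2 ^ k * exp (\<beta> * \<Gamma>)"
proof -
  have "(2 * q / p) ^ (k - 1) / p = (2 * exp (\<beta> * (c - b))) ^ (k - 1) * (1 / p)"
    by (simp add: two_q_div_p_eq)
  also have "1 / p = 2 * exp (\<beta> * c)"
    by (simp add: p_def exp_minus field_simps)
  also have "(2 * exp (\<beta> * (c - b))) ^ (k - 1) * (2 * exp (\<beta> * c)) =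
               2 * 2 ^ (k - 1) * exp (\<beta> * c + real (k - 1) * (\<beta> * (c - b)))"
    by (simp add: power_mult_distrib exp_add exp_of_nat_mult)
  also have "2 * 2 ^ (k - 1) = (2 :: real) ^ k"
    using k_pos by (simp flip: power_Suc)
  also have "\<beta> * c + real (k - 1) * (\<beta> * (c - b)) = \<beta> * \<Gamma>"
    using k_pos by (simp add: of_nat_diff algebra_simps)
  finally show ?thesis .
qed

lemma lyap_0_le_exp: "lyap 0 \<le> real k * 2 ^ k * exp (\<beta> * \<Gamma>)"
  using lyap_0_le[unfolded lyap_top_increment_eq] by (simp add: mult.assoc)

lemma early_hit_prob_le:
  assumes "0 \<le> lo"
  shows "(\<Sum>t | 1 \<le> t \<and> real t \<le> lo. hit t) \<le> lo * (p * \<rho> ^ (k - 1))"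
proof -
  let ?L = "{t. 1 \<le> t \<and> real t \<le> lo}"
  have L_sub: "?L \<subseteq> {1..nat \<lfloor>lo\<rfloor>}"
    by (auto simp: le_nat_floor)
  have "(\<Sum>t\<in>?L. hit t) \<le> real (card ?L) * (p * \<rho> ^ (k - 1))"
  proof (rule sum_bounded_above)
    fix t assume "t \<in> ?L"
    then have "t = Suc (t - 1)"
      by simp
    then show "hit t \<le> p * \<rho> ^ (k - 1)"
      using hit_prob_Suc_le[of "t - 1"] by simp
  qed
  also have "\<dots> \<le> lo * (p * \<rho> ^ (k - 1))"
  proof (rule mult_right_mono)
    have "card ?L \<le> nat \<lfloor>lo\<rfloor>"
      using card_mono[OF _ L_sub] by simp
    then show "real (card ?L) \<le> lo"
      using assms by linarith
  qed (use p_pos p_less_q in simp)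
  finally show ?thesis .
qed

lemma tau_between_prob_eq:
  assumes "lo < hi" and "0 < hi"
  shows "tau_between_prob \<beta> b c k lo hi =
           1 - survival_prob (nat \<lceil>hi\<rceil> - 1) - (\<Sum>t | 1 \<le> t \<and> real t \<le> lo. hit t)"
proof -
  define N where "N = nat \<lceil>hi\<rceil> - 1"
  let ?L = "{t. 1 \<le> t \<and> real t \<le> lo}"
  have below_hi: "real t < hi \<longleftrightarrow> t \<le> N" for t
    using assms(2) by (simp add: N_def less_ceiling_iff) linarith
  have L_sub: "?L \<subseteq> {1..N}"
    using below_hi assms(1) by force
  have "{t. 1 \<le> t \<and> lo < real t \<and> real t < hi} = {1..N} - ?L"
  proof (rule set_eqI)
    fix t
    show "t \<in> {t. 1 \<le> t \<and> lo < real t \<and> real t < hi} \<longleftrightarrow> t \<in> {1..N} - ?L"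
      using below_hi[of t] by auto
  qed
  then have "tau_between_prob \<beta> b c k lo hi = (\<Sum>t\<in>{1..N}. hit t) - (\<Sum>t\<in>?L. hit t)"
    unfolding tau_between_prob_def using L_sub by (simp add: sum_diff)
  then show ?thesis
    using hit_prob_sum[of N] by (simp add: N_def)
qed

lemma late_survival_prob_le:
  assumes "exp (\<beta> * \<Gamma> + \<beta> * \<epsilon>) - 1 \<le> real N"
  shows "survival_prob N \<le>
           real k * 2 ^ k * exp (\<beta> * \<Gamma>) * exp 1 * exp (- exp (\<beta> * \<epsilon>) / (real k * 2 ^ k))"
proof -
  define K where "K = real k * 2 ^ k"
  define E where "E = exp (\<beta> * \<Gamma>)"
  have K_pos: "0 < K" and E_pos: "0 < E"
    using k_pos by (simp_all add: K_def E_def)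
  have "1 \<le> lyap 0" and "lyap 0 \<le> K * E"
    using one_le_lyap[of 0] k_pos lyap_0_le_exp by (simp_all add: K_def E_def)
  then have "survival_prob N \<le> (K * E) * exp (- real N / (K * E))"
    using survival_prob_le[of N] mult_exp_neg_divide_mono[of "real N" "lyap 0" "K * E"] by simp
  also have "\<dots> \<le> (K * E) * exp (1 - exp (\<beta> * \<epsilon>) / K)"
  proof -
    have "(E * exp (\<beta> * \<epsilon>) - 1) / (K * E) \<le> real N / (K * E)"
      using assms \<open>1 \<le> lyap 0\<close> \<open>lyap 0 \<le> K * E\<close>
      by (intro divide_right_mono) (simp_all add: E_def exp_add)
    moreover have "(E * exp (\<beta> * \<epsilon>) - 1) / (K * E) = exp (\<beta> * \<epsilon>) / K - 1 / (K * E)"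
      using K_pos E_pos by (simp add: field_simps)
    moreover have "1 / (K * E) \<le> 1"
      using \<open>1 \<le> lyap 0\<close> \<open>lyap 0 \<le> K * E\<close> by simp
    ultimately have "- (real N / (K * E)) \<le> 1 - exp (\<beta> * \<epsilon>) / K"
      by linarith
    then show ?thesis
      using K_pos E_pos by simp
  qed
  also have "\<dots> = K * E * exp 1 * exp (- exp (\<beta> * \<epsilon>) / K)"
    by (simp add: exp_diff exp_minus field_simps)
  finally show ?thesis
    by (simp add: K_def E_def)
qed

lemma tau_between_prob_deviation:
  assumes "0 < \<epsilon>"
  shows "\<bar>tau_between_prob \<beta> b c k (exp (\<beta> * \<Gamma> - \<beta> * \<epsilon>)) (exp (\<beta> * \<Gamma> + \<beta> * \<epsilon>)) - 1\<bar>
           \<le>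
           real k * 2 ^ k * exp (\<beta> * \<Gamma>) * exp 1 * exp (- exp (\<beta> * \<epsilon>) / (real k * 2 ^ k)) +
           exp (- (\<beta> * \<epsilon>)) / 2"
proof -
  define lo where "lo = exp (\<beta> * \<Gamma> - \<beta> * \<epsilon>)"
  define hi where "hi = exp (\<beta> * \<Gamma> + \<beta> * \<epsilon>)"
  define N where "N = nat \<lceil>hi\<rceil> - 1"
  have "lo < hi" and "0 < lo"
    using assms \<beta>_pos by (simp_all add: lo_def hi_def)
  have "hi - 1 \<le> real N"
    unfolding N_def by linarith
  have early: "(\<Sum>t | 1 \<le> t \<and> real t \<le> lo. hit t) \<le> exp (- (\<beta> * \<epsilon>)) / 2"
  proof -
    have "(\<Sum>t | 1 \<le> t \<and> real t \<le> lo. hit t) \<le> lo * (p * \<rho> ^ (k - 1))"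
      using \<open>0 < lo\<close> by (intro early_hit_prob_le) simp
    also have "\<dots> = exp (- (\<beta> * \<epsilon>)) / 2"
      unfolding lo_def p_rho_power_eq by (simp add: mult_exp_exp)
    finally show ?thesis .
  qed
  have late: "survival_prob N \<le>
                 real k * 2 ^ k * exp (\<beta> * \<Gamma>) * exp 1 * exp (- exp (\<beta> * \<epsilon>) / (real k * 2 ^ k))"
    using \<open>hi - 1 \<le> real N\<close> unfolding hi_def by (rule late_survival_prob_le)
  have "0 \<le> (\<Sum>t | 1 \<le> t \<and> real t \<le> lo. hit t)"
    by (simp add: hit_prob_def sum_nonneg)
  moreover have "0 \<le> survival_prob N"
    by (simp add: survival_prob_def)
  moreover have "tau_between_prob \<beta> b c k lo hi = 1 - survival_prob N - (\<Sum>t | 1 \<le> t \<and> real t \<le> lo. hit t)"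
    unfolding N_def using \<open>0 < lo\<close> \<open>lo < hi\<close> by (intro tau_between_prob_eq) auto
  ultimately have "\<bar>tau_between_prob \<beta> b c k lo hi - 1\<bar> =
                    survival_prob N + (\<Sum>t | 1 \<le> t \<and> real t \<le> lo. hit t)"
    by simp
  then show ?thesis
    using early late unfolding lo_def hi_def by simp
qed

end

theorem lemma1:
  fixes b c \<epsilon> :: real and k :: nat
  assumes "0 < b" and "b < c" and "1 \<le> k" and "0 < \<epsilon>"
  shows "((\<lambda>\<beta>. tau_between_prob \<beta> b c k
             (exp (\<beta>*c*real k - \<beta>*b*(real k - 1) - \<beta>*\<epsilon>))
             (exp (\<beta>*c*real k - \<beta>*b*(real k - 1) + \<beta>*\<epsilon>)))
          \<longlongrightarrow> 1) at_top"
proof -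
  define \<Gamma> where "\<Gamma> = c * real k - b * (real k - 1)"
  define K where "K = real k * 2 ^ k"
  have chain: "hitting_time \<beta> b c k" if "0 < \<beta>" for \<beta>
    using assms that by unfold_locales auto
  have "0 < K" and "0 < \<Gamma>"
    using hitting_time.\<Gamma>_pos[OF chain[of 1]] assms(3) by (simp_all add: \<Gamma>_def K_def)
  have exponent: "\<beta>*c*real k - \<beta>*b*(real k - 1) = \<beta> * \<Gamma>" for \<beta>
    by (simp add: \<Gamma>_def algebra_simps)
  have "\<forall>\<^sub>F \<beta> in at_top.
          norm (tau_between_prob \<beta> b c k
                  (exp (\<beta>*c*real k - \<beta>*b*(real k - 1) - \<beta>*\<epsilon>))
                  (exp (\<beta>*c*real k - \<beta>*b*(real k - 1) + \<beta>*\<epsilon>)) - 1) \<le>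
            K * exp (\<beta> * \<Gamma>) * exp 1 * exp (- exp (\<beta> * \<epsilon>) / K) + exp (- (\<beta> * \<epsilon>)) / 2"
    using eventually_gt_at_top[of 0]
  proof eventually_elim
    case (elim \<beta>)
    show ?case
      unfolding exponent real_norm_def
      by (rule hitting_time.tau_between_prob_deviation[OF chain[OF elim] assms(4), folded \<Gamma>_def K_def])
  qed
  from Lim_null_comparison[OF this deviation_bound_tendsto_0[OF \<open>0 < K\<close> \<open>0 < \<Gamma>\<close> assms(4)]]
  show ?thesis
    by (rule LIM_zero_cancel)
qed

end
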